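(* Fix a context-free grammar $G=(N,\Sigma,P,S)$. Let $M=(V,E,L)$ be a finite directed edge-labeled graph with $L\subseteq\Sigma$, $E\subseteq V\times L\times V$, and no two parallel edges with the same label, and let $V_s,V_f\subseteq V$ be sets of start and final vertices. Then the worst-case space complexity of the GLL-based graph parsing algorithm (described in the context) run on $G$ and $M$ is $O(|V|^3+|E|)$, the constants depending only on $G$.
   Context: Paths and queries: a path in $M$ is a sequence of edges $(v_0,l_0,v_1),(v_1,l_1,v_2),\dots,(v_{n-1},l_{n-1},v_n)$ with $n\ge 1$; its word is $l_0l_1\cdots l_{n-1}$. The algorithm builds a representation of all paths $p$ from a vertex of $V_s$ to a vertex of $V_f$ whose word belongs to $\mathcal{L}(G)$. The GLL-based graph parsing algorithm: it is the table-driven generalized LL (GLL) parsing algorithm in which input positions are vertices of $M$ instead of indices into a string. A grammar slot is a production with a dot, $X\to\alpha\cdot\beta$. The algorithm maintains a graph-structured stack (GSS) whose nodes are labeled by pairs (grammar slot, vertex); descriptors $(L,u,i,w)$ with $L$ a grammar slot, $u$ a GSS node, $i\in V$ the current position and $w$ an SPPF node (or a dummy); a working set $R$ of descriptors to process, a set $U$ of all descriptors ever created (a descriptor is added to $R$ only if it is not already in $U$), and a set $P$ of popped (GSS node, SPPF node) pairs. Initially $R$ contains one initial descriptor for each vertex in $V_s$. Processing a descriptor at slot $X\to\alpha\cdot x\beta$ at vertex $i$: if $x$ is a terminal, then for every outgoing edge $e$ of $i$ with label $x$, the terminal SPPF node for $e$ is created/reused, combined with the current SPPF node, and a descriptor with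 slot $X\to\alpha x\cdot\beta$ and position the target of $e$ is added; if $x$ is a nonterminal, a GSS node for $(X\to\alpha x\cdot\beta, i)$ is created/reused (with an edge to the current GSS node labeled by the current SPPF node), and for every slot in the union, over outgoing edges $e$ of $i$, of the LL parse-table entries for $x$ and the label of $e$, a descriptor at position $i$ is added; at a slot $X\to\alpha\cdot$ the standard GLL pop operation is performed. All other operations (add, pop, create, SPPF node construction) are those of standard GLL. The algorithm terminates when $R$ is empty. The output is a binarized Shared Packed Parse Forest (SPPF) with terminal nodes $(v_0,T,v_1)$ for edges $(v_0,T,v_1)\in E$, $\varepsilon$-nodes $(v,\varepsilon,v)$, nonterminal nodes $(v_0,A,v_1)$, intermediate nodes $(v_0,t,v_1)$ with $t$ a grammar slot, and packed nodes $(A\to\alpha\cdot\beta,v)$ (children of nonterminal/intermediate nodes, with at most two children), each node created at most once per label. *)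

theory Defs
  imports Main
begin

datatype ('n,'t) sym = NT 'n | T 't

text \<open>A context-free grammar is given by a finite set of productions
  Pr :: ('n \<times> ('n,'t) sym list) set and a start nonterminal S; nonterminals
  and terminals are the elements of the types 'n and 't.\<close>

inductive nullable_sym :: "('n \<times> ('n,'t) sym list) set \<Rightarrow> ('n,'t) sym \<Rightarrow> bool"
  for Pr where
  "(A, \<alpha>) \<in> Pr \<Longrightarrow> \<forall>x\<in>set \<alpha>. nullable_sym Pr x \<Longrightarrow> nullable_sym Pr (NT A)"

definition nullable_w :: "('n \<times> ('n,'t) sym list) set \<Rightarrow> ('n,'t) sym list \<Rightarrow> bool" where
  "nullable_w Pr \<alpha> \<longleftrightarrow> (\<forall>x\<in>set \<alpha>. nullable_sym Pr x)"

inductive first_w :: "('n \<times> ('n,'t) sym list) set \<Rightarrow> ('n,'t) sym list \<Rightarrow> 't \<Rightarrow> bool"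
  for Pr where
  "first_w Pr (T a # xs) a"
| "(A, \<alpha>) \<in> Pr \<Longrightarrow> first_w Pr \<alpha> a \<Longrightarrow> first_w Pr (NT A # xs) a"
| "nullable_sym Pr x \<Longrightarrow> first_w Pr xs a \<Longrightarrow> first_w Pr (x # xs) a"

inductive follow :: "('n \<times> ('n,'t) sym list) set \<Rightarrow> 'n \<Rightarrow> 't \<Rightarrow> bool"
  for Pr where
  "(B, \<gamma> @ NT A # \<delta>) \<in> Pr \<Longrightarrow> first_w Pr \<delta> a \<Longrightarrow> follow Pr A a"
| "(B, \<gamma> @ NT A # \<delta>) \<in> Pr \<Longrightarrow> nullable_w Pr \<delta> \<Longrightarrow> follow Pr B a \<Longrightarrow> follow Pr A a"

text \<open>Slot X \<alpha> \<beta> is the grammar slot X \<rightarrow> \<alpha>\<cdot>\<beta>.\<close>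
datatype ('n,'t) slot = Slot 'n "('n,'t) sym list" "('n,'t) sym list"

definition ll_table :: "('n \<times> ('n,'t) sym list) set \<Rightarrow> 'n \<Rightarrow> 't \<Rightarrow> ('n,'t) slot set" where
  "ll_table Pr A a = {Slot A [] \<alpha> | \<alpha>. (A, \<alpha>) \<in> Pr \<and>
      (first_w Pr \<alpha> a \<or> (nullable_w Pr \<alpha> \<and> follow Pr A a))}"

definition tbl_union :: "('n \<times> ('n,'t) sym list) set \<Rightarrow> ('v \<times> 't \<times> 'v) set \<Rightarrow> 'n \<Rightarrow> 'v \<Rightarrow> ('n,'t) slot set" where
  "tbl_union Pr E A i = (\<Union>e\<in>{e\<in>E. fst e = i}. ll_table Pr A (fst (snd e)))"

text \<open>GSS-node / descriptor labels: the GLL initial label L0, or a grammar slot.\<close>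
datatype ('n,'t) lbl = L0 | LS "('n,'t) slot"

text \<open>SPPF nodes (symbol/intermediate nodes, plus the dummy node \$).\<close>
datatype ('n,'t,'v) snode =
    SDummy
  | STerm 'v 't 'v
  | SEps 'v
  | SNT 'v 'n 'v
  | SInt 'v "('n,'t) slot" 'v

fun lext :: "('n,'t,'v) snode \<Rightarrow> 'v" where
  "lext (STerm a _ _) = a" | "lext (SEps a) = a" | "lext (SNT a _ _) = a"
| "lext (SInt a _ _) = a" | "lext SDummy = undefined"

fun rext :: "('n,'t,'v) snode \<Rightarrow> 'v" where
  "rext (STerm _ _ b) = b" | "rext (SEps b) = b" | "rext (SNT _ _ b) = b"
| "rext (SInt _ _ b) = b" | "rext SDummy = undefined"

type_synonym ('n,'t,'v) gss = "('n,'t) lbl \<times> 'v"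
type_synonym ('n,'t,'v) desc = "('n,'t) lbl \<times> ('n,'t,'v) gss \<times> 'v \<times> ('n,'t,'v) snode"
text \<open>A packed node: (parent, slot, pivot, left child (SDummy if none), right child).\<close>
type_synonym ('n,'t,'v) packed =
  "('n,'t,'v) snode \<times> ('n,'t) slot \<times> 'v \<times> ('n,'t,'v) snode \<times> ('n,'t,'v) snode"

record ('n,'t,'v) gll_state =
  Rs  :: "('n,'t,'v) desc set"                                  \<comment> \<open>working set R\<close>
  Us  :: "('n,'t,'v) desc set"                                  \<comment> \<open>all descriptors U\<close>
  Ps  :: "(('n,'t,'v) gss \<times> ('n,'t,'v) snode) set"              \<comment> \<open>popped set P\<close>
  GN  :: "('n,'t,'v) gss set"                                   \<comment> \<open>GSS nodes\<close>
  GE  :: "(('n,'t,'v) gss \<times> ('n,'t,'v) snode \<times> ('n,'t,'v) gss) set" \<comment> \<open>labelled GSS edges\<close>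
  SN  :: "('n,'t,'v) snode set"                                 \<comment> \<open>SPPF symbol/intermediate nodes\<close>
  PK  :: "('n,'t,'v) packed set"                                \<comment> \<open>SPPF packed nodes (with their children)\<close>

text \<open>add for a set of descriptors (equivalent to repeated add).\<close>
definition add_descs :: "('n,'t,'v) desc set \<Rightarrow> ('n,'t,'v) gll_state \<Rightarrow> ('n,'t,'v) gll_state" where
  "add_descs D \<sigma> = \<sigma>\<lparr>Rs := Rs \<sigma> \<union> (D - Us \<sigma>), Us := Us \<sigma> \<union> D\<rparr>"

text \<open>getNodeP(X \<rightarrow> \<alpha>\<cdot>\<beta>, w, z) of standard GLL (Scott and Johnstone):
  the returned node, and the (symbol and packed) nodes it creates if absent.\<close>
definition gnp_trivial :: "('n \<times> ('n,'t) sym list) set \<Rightarrow> ('n,'t) slot \<Rightarrow> bool" where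
  "gnp_trivial Pr sl = (case sl of Slot X \<alpha> \<beta> \<Rightarrow>
      \<beta> \<noteq> [] \<and> (\<exists>x. \<alpha> = [x] \<and> \<not> nullable_sym Pr x))"

definition gnp_node :: "('n \<times> ('n,'t) sym list) set \<Rightarrow> ('n,'t) slot \<Rightarrow> ('n,'t,'v) snode \<Rightarrow> ('n,'t,'v) snode \<Rightarrow> ('n,'t,'v) snode" where
  "gnp_node Pr sl w z = (if gnp_trivial Pr sl then z else
     (case sl of Slot X \<alpha> \<beta> \<Rightarrow>
       let i = rext z; j = (if w = SDummy then lext z else lext w) in
       if \<beta> = [] then SNT j X i else SInt j sl i))"

definition gnp_packed :: "('n \<times> ('n,'t) sym list) set \<Rightarrow> ('n,'t) slot \<Rightarrow> ('n,'t,'v) snode \<Rightarrow> ('n,'t,'v) snode \<Rightarrow> ('n,'t,'v) packed set" where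
  "gnp_packed Pr sl w z = (if gnp_trivial Pr sl then {} else
     {(gnp_node Pr sl w z, sl, lext z, w, z)})"

definition get_node_p :: "('n \<times> ('n,'t) sym list) set \<Rightarrow> ('n,'t) slot \<Rightarrow> ('n,'t,'v) snode \<Rightarrow> ('n,'t,'v) snode
    \<Rightarrow> ('n,'t,'v) gll_state \<Rightarrow> ('n,'t,'v) gll_state" where
  "get_node_p Pr sl w z \<sigma> = \<sigma>\<lparr>SN := SN \<sigma> \<union> {gnp_node Pr sl w z},
                               PK := PK \<sigma> \<union> gnp_packed Pr sl w z\<rparr>"

definition gll_pop :: "('n \<times> ('n,'t) sym list) set \<Rightarrow> ('n,'t,'v) gss \<Rightarrow> 'v \<Rightarrow> ('n,'t,'v) snode
    \<Rightarrow> ('n,'t,'v) gll_state \<Rightarrow> ('n,'t,'v) gll_state" where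
  "gll_pop Pr u i z \<sigma> = (case fst u of
      L0 \<Rightarrow> \<sigma>
    | LS sl \<Rightarrow>
        let \<sigma>1 = \<sigma>\<lparr>Ps := Ps \<sigma> \<union> {(u, z)}\<rparr>;
            es = {(w, v). (u, w, v) \<in> GE \<sigma>};
            \<sigma>2 = \<sigma>1\<lparr>SN := SN \<sigma>1 \<union> {gnp_node Pr sl w z | w v. (w, v) \<in> es},
                      PK := PK \<sigma>1 \<union> (\<Union>(w, v)\<in>es. gnp_packed Pr sl w z)\<rparr>
        in add_descs {(LS sl, v, i, gnp_node Pr sl w z) | w v. (w, v) \<in> es} \<sigma>2)"

definition gll_create :: "('n \<times> ('n,'t) sym list) set \<Rightarrow> ('n,'t) slot \<Rightarrow> ('n,'t,'v) gss \<Rightarrow> 'v \<Rightarrow> ('n,'t,'v) snode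
    \<Rightarrow> ('n,'t,'v) gll_state \<Rightarrow> ('n,'t,'v) gll_state" where
  "gll_create Pr sl u i w \<sigma> = (
     let v = (LS sl, i);
         \<sigma>1 = \<sigma>\<lparr>GN := GN \<sigma> \<union> {v}\<rparr>
     in if (v, w, u) \<in> GE \<sigma> then \<sigma>1
        else
          let \<sigma>2 = \<sigma>1\<lparr>GE := GE \<sigma>1 \<union> {(v, w, u)}\<rparr>;
              zs = {z. (v, z) \<in> Ps \<sigma>2};
              \<sigma>3 = \<sigma>2\<lparr>SN := SN \<sigma>2 \<union> gnp_node Pr sl w ` zs,
                        PK := PK \<sigma>2 \<union> (\<Union>z\<in>zs. gnp_packed Pr sl w z)\<rparr>
          in add_descs {(LS sl, u, rext z, gnp_node Pr sl w z) | z. z \<in> zs} \<sigma>3)"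

definition gll_process :: "('n \<times> ('n,'t) sym list) set \<Rightarrow> 'n \<Rightarrow> ('v \<times> 't \<times> 'v) set
    \<Rightarrow> ('n,'t,'v) desc \<Rightarrow> ('n,'t,'v) gll_state \<Rightarrow> ('n,'t,'v) gll_state" where
  "gll_process Pr S E d \<sigma> = (case d of (L, u, i, w) \<Rightarrow>
     (case L of
        L0 \<Rightarrow> add_descs {(LS s, u, i, SDummy) | s. s \<in> tbl_union Pr E S i} \<sigma>
      | LS (Slot X \<alpha> \<beta>) \<Rightarrow>
          (case \<beta> of
             [] \<Rightarrow>
               (if \<alpha> = [] then
                  let e = SEps i; sl = Slot X [] [];
                      \<sigma>1 = get_node_p Pr sl w e (\<sigma>\<lparr>SN := SN \<sigma> \<union> {e}\<rparr>)
                  in gll_pop Pr u i (gnp_node Pr sl w e) \<sigma>1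
                else gll_pop Pr u i w \<sigma>)
           | T a # \<beta>' \<Rightarrow>
               let sl = Slot X (\<alpha> @ [T a]) \<beta>';
                   es = {j. (i, a, j) \<in> E};
                   \<sigma>1 = \<sigma>\<lparr>SN := SN \<sigma> \<union> {STerm i a j | j. j \<in> es}
                                     \<union> {gnp_node Pr sl w (STerm i a j) | j. j \<in> es},
                            PK := PK \<sigma> \<union> (\<Union>j\<in>es. gnp_packed Pr sl w (STerm i a j))\<rparr>
               in add_descs {(LS sl, u, j, gnp_node Pr sl w (STerm i a j)) | j. j \<in> es} \<sigma>1
           | NT A # \<beta>' \<Rightarrow>
               let sl = Slot X (\<alpha> @ [NT A]) \<beta>';
                   \<sigma>1 = gll_create Pr sl u i w \<sigma>
               in add_descs {(LS s, (LS sl, i), i, SDummy) | s. s \<in> tbl_union Pr E A i} \<sigma>1)))"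

definition gll_step :: "('n \<times> ('n,'t) sym list) set \<Rightarrow> 'n \<Rightarrow> ('v \<times> 't \<times> 'v) set
    \<Rightarrow> ('n,'t,'v) gll_state \<Rightarrow> ('n,'t,'v) gll_state \<Rightarrow> bool" where
  "gll_step Pr S E \<sigma> \<sigma>' \<longleftrightarrow> (\<exists>d\<in>Rs \<sigma>. \<sigma>' = gll_process Pr S E d (\<sigma>\<lparr>Rs := Rs \<sigma> - {d}\<rparr>))"

definition gll_init :: "'v set \<Rightarrow> ('n,'t,'v) gll_state" where
  "gll_init Vs = \<lparr>Rs = {(L0, (L0, v), v, SDummy) | v. v \<in> Vs},
                 Us = {(L0, (L0, v), v, SDummy) | v. v \<in> Vs},
                 Ps = {}, GN = {(L0, v) | v. v \<in> Vs}, GE = {}, SN = {}, PK = {}\<rparr>"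

definition gll_reachable :: "('n \<times> ('n,'t) sym list) set \<Rightarrow> 'n \<Rightarrow> ('v \<times> 't \<times> 'v) set \<Rightarrow> 'v set
    \<Rightarrow> ('n,'t,'v) gll_state \<Rightarrow> bool" where
  "gll_reachable Pr S E Vs \<sigma> \<longleftrightarrow> (gll_step Pr S E)\<^sup>*\<^sup>* (gll_init Vs) \<sigma>"

definition gll_finite :: "('n,'t,'v) gll_state \<Rightarrow> bool" where
  "gll_finite \<sigma> \<longleftrightarrow> finite (Rs \<sigma>) \<and> finite (Us \<sigma>) \<and> finite (Ps \<sigma>) \<and> finite (GN \<sigma>)
      \<and> finite (GE \<sigma>) \<and> finite (SN \<sigma>) \<and> finite (PK \<sigma>)"

definition gll_space :: "('n,'t,'v) gll_state \<Rightarrow> nat" where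
  "gll_space \<sigma> = card (Rs \<sigma>) + card (Us \<sigma>) + card (Ps \<sigma>) + card (GN \<sigma>)
      + card (GE \<sigma>) + card (SN \<sigma>) + card (PK \<sigma>)"

end

theory Submission
  imports Defs
begin

text \<open>Every object the algorithm stores is determined by at most three vertices together
  with data from a finite set fixed by the grammar: grammar slots, GSS labels, and the kind of
  an SPPF node (terminal, epsilon, nonterminal or intermediate slot). This is an invariant of
  all reachable states, so each of the seven sets of a state has at most a grammar constant
  times |V|^3 elements: descriptors, GSS edges, popped pairs and SPPF symbol nodes involve two
  vertices, GSS nodes one, and only packed nodes three (left extent, pivot, right extent).\<close>

definition grammar_slots :: "('n \<times> ('n,'t) sym list) set \<Rightarrow> ('n,'t) slot set" where
  "grammar_slots Pr = {Slot X \<alpha> \<beta> | X \<alpha> \<beta>. (X, \<alpha> @ \<beta>) \<in> Pr}"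

definition grammar_labels :: "('n \<times> ('n,'t) sym list) set \<Rightarrow> ('n,'t) lbl set" where
  "grammar_labels Pr = insert L0 (LS ` grammar_slots Pr)"

definition grammar_terminals :: "('n \<times> ('n,'t) sym list) set \<Rightarrow> 't set" where
  "grammar_terminals Pr = {a. \<exists>X r. (X, r) \<in> Pr \<and> T a \<in> set r}"

datatype ('n,'t) node_kind = KDummy | KTerm 't | KEps | KNT 'n | KInt "('n,'t) slot"

fun kind_of :: "('n,'t,'v) snode \<Rightarrow> ('n,'t) node_kind" where
  "kind_of SDummy = KDummy"
| "kind_of (STerm _ a _) = KTerm a"
| "kind_of (SEps _) = KEps"
| "kind_of (SNT _ X _) = KNT X"
| "kind_of (SInt _ s _) = KInt s"

fun node_of_kind :: "'v \<Rightarrow> 'v \<Rightarrow> ('n,'t) node_kind \<Rightarrow> ('n,'t,'v) snode" where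
  "node_of_kind j i KDummy = SDummy"
| "node_of_kind j i (KTerm a) = STerm j a i"
| "node_of_kind j i KEps = SEps j"
| "node_of_kind j i (KNT X) = SNT j X i"
| "node_of_kind j i (KInt s) = SInt j s i"

definition node_kinds :: "('n \<times> ('n,'t) sym list) set \<Rightarrow> ('n,'t) node_kind set" where
  "node_kinds Pr = {KDummy, KEps} \<union> KTerm ` grammar_terminals Pr \<union> KNT ` fst ` Pr
     \<union> KInt ` grammar_slots Pr"

lemma node_of_kind_of:
  "n \<noteq> SDummy \<Longrightarrow> node_of_kind (lext n) (rext n) (kind_of n) = n"
  by (cases n) auto

lemma finite_grammar_slots:
  assumes "finite Pr"
  shows "finite (grammar_slots Pr)"
proof -
  have "grammar_slots Pr
      \<subseteq> (\<Union>(X, r)\<in>Pr. (\<lambda>k. Slot X (take k r) (drop k r)) ` {0..length r})"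
  proof
    fix s assume "s \<in> grammar_slots Pr"
    then obtain X \<alpha> \<beta> where "s = Slot X \<alpha> \<beta>" "(X, \<alpha> @ \<beta>) \<in> Pr"
      unfolding grammar_slots_def by blast
    then show "s \<in> (\<Union>(X, r)\<in>Pr. (\<lambda>k. Slot X (take k r) (drop k r)) ` {0..length r})"
      by (intro UN_I[of "(X, \<alpha> @ \<beta>)"]) (auto intro!: image_eqI[of _ _ "length \<alpha>"])
  qed
  moreover have "finite (\<Union>(X, r)\<in>Pr. (\<lambda>k. Slot X (take k r) (drop k r)) ` {0..length r})"
    using assms by auto
  ultimately show ?thesis by (rule finite_subset)
qed

lemma finite_grammar_terminals:
  assumes "finite Pr"
  shows "finite (grammar_terminals Pr)"
proof -
  have "grammar_terminals Pr \<subseteq> (\<Union>(X, r)\<in>Pr. T -` set r)"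
    unfolding grammar_terminals_def by auto
  moreover have "finite (\<Union>(X, r)\<in>Pr. T -` set r)"
    using assms by (auto intro!: finite_vimageI simp: inj_def)
  ultimately show ?thesis by (rule finite_subset)
qed

lemma finite_grammar_labels: "finite Pr \<Longrightarrow> finite (grammar_labels Pr)"
  by (simp add: grammar_labels_def finite_grammar_slots)

lemma finite_node_kinds: "finite Pr \<Longrightarrow> finite (node_kinds Pr)"
  by (simp add: node_kinds_def finite_grammar_slots finite_grammar_terminals)

lemma LS_in_grammar_labels: "LS sl \<in> grammar_labels Pr \<longleftrightarrow> sl \<in> grammar_slots Pr"
  by (auto simp: grammar_labels_def)

lemma KNT_in_node_kinds: "Slot X \<alpha> \<beta> \<in> grammar_slots Pr \<Longrightarrow> KNT X \<in> node_kinds Pr"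
  unfolding grammar_slots_def node_kinds_def by (force intro: rev_image_eqI)

section \<open>The state invariant\<close>

definition sppf_node :: "('n \<times> ('n,'t) sym list) set \<Rightarrow> 'v set \<Rightarrow> ('n,'t,'v) snode \<Rightarrow> bool" where
  "sppf_node Pr V n \<longleftrightarrow>
     n \<noteq> SDummy \<and> lext n \<in> V \<and> rext n \<in> V \<and> kind_of n \<in> node_kinds Pr"

text \<open>The SPPF component of a descriptor or GSS edge from k to i is either the dummy node,
  when nothing has been parsed yet and so k = i, or a node with exactly these extents.\<close>
definition spans ::
    "('n \<times> ('n,'t) sym list) set \<Rightarrow> 'v set \<Rightarrow> ('n,'t,'v) snode \<Rightarrow> 'v \<Rightarrow> 'v \<Rightarrow> bool" where
  "spans Pr V w k i \<longleftrightarrow>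
     (w = SDummy \<and> k = i) \<or> (sppf_node Pr V w \<and> lext w = k \<and> rext w = i)"

definition desc_ok :: "('n \<times> ('n,'t) sym list) set \<Rightarrow> 'v set \<Rightarrow> ('n,'t,'v) desc \<Rightarrow> bool" where
  "desc_ok Pr V d \<longleftrightarrow> (case d of (L, (L', k), i, w) \<Rightarrow>
     L \<in> grammar_labels Pr \<and> L' \<in> grammar_labels Pr \<and> k \<in> V \<and> i \<in> V \<and> spans Pr V w k i
     \<and> (L = L0 \<longrightarrow> w = SDummy)
     \<and> (\<forall>X \<alpha> \<beta>. L = LS (Slot X \<alpha> \<beta>) \<longrightarrow> (\<alpha> = [] \<longleftrightarrow> w = SDummy)))"

definition gss_edge_ok :: "('n \<times> ('n,'t) sym list) set \<Rightarrow> 'v set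
    \<Rightarrow> ('n,'t,'v) gss \<times> ('n,'t,'v) snode \<times> ('n,'t,'v) gss \<Rightarrow> bool" where
  "gss_edge_ok Pr V e \<longleftrightarrow> (case e of ((L, i), w, (L', k)) \<Rightarrow>
     (\<exists>X \<alpha> \<beta>. L = LS (Slot X \<alpha> \<beta>) \<and> \<alpha> \<noteq> [] \<and> Slot X \<alpha> \<beta> \<in> grammar_slots Pr
         \<and> (gnp_trivial Pr (Slot X \<alpha> \<beta>) \<longrightarrow> w = SDummy))
     \<and> L' \<in> grammar_labels Pr \<and> i \<in> V \<and> k \<in> V \<and> spans Pr V w k i)"

definition popped_ok :: "('n \<times> ('n,'t) sym list) set \<Rightarrow> 'v set
    \<Rightarrow> ('n,'t,'v) gss \<times> ('n,'t,'v) snode \<Rightarrow> bool" where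
  "popped_ok Pr V p \<longleftrightarrow> (case p of ((L, k), z) \<Rightarrow>
     L \<in> grammar_labels Pr \<and> k \<in> V \<and> sppf_node Pr V z \<and> lext z = k)"

definition packed_ok :: "('n \<times> ('n,'t) sym list) set \<Rightarrow> 'v set \<Rightarrow> ('n,'t,'v) packed \<Rightarrow> bool" where
  "packed_ok Pr V x \<longleftrightarrow> (case x of (p, sl, piv, w, z) \<Rightarrow>
     p = gnp_node Pr sl w z \<and> piv = lext z \<and> sl \<in> grammar_slots Pr \<and> sppf_node Pr V z
     \<and> (w = SDummy \<or> (sppf_node Pr V w \<and> rext w = lext z)))"

definition gll_state_ok :: "('n \<times> ('n,'t) sym list) set \<Rightarrow> 'v set \<Rightarrow> ('n,'t,'v) gll_state \<Rightarrow> bool" where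
  "gll_state_ok Pr V \<sigma> \<longleftrightarrow>
     Ball (Rs \<sigma>) (desc_ok Pr V) \<and> Ball (Us \<sigma>) (desc_ok Pr V) \<and> Ball (Ps \<sigma>) (popped_ok Pr V)
     \<and> GN \<sigma> \<subseteq> grammar_labels Pr \<times> V \<and> Ball (GE \<sigma>) (gss_edge_ok Pr V)
     \<and> Ball (SN \<sigma>) (sppf_node Pr V) \<and> Ball (PK \<sigma>) (packed_ok Pr V)"

lemma gnp_node_sppf_node:
  assumes "sl \<in> grammar_slots Pr" "sppf_node Pr V z" "spans Pr V w k (lext z)"
    "gnp_trivial Pr sl \<longrightarrow> w = SDummy"
  shows "sppf_node Pr V (gnp_node Pr sl w z) \<and> lext (gnp_node Pr sl w z) = k
         \<and> rext (gnp_node Pr sl w z) = rext z"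
proof (cases "gnp_trivial Pr sl")
  case True
  then show ?thesis using assms by (auto simp: gnp_node_def spans_def)
next
  case False
  obtain X \<alpha> \<beta> where sl: "sl = Slot X \<alpha> \<beta>" by (cases sl)
  have "KNT X \<in> node_kinds Pr" "KInt sl \<in> node_kinds Pr"
    using assms(1) sl KNT_in_node_kinds[of X \<alpha> \<beta> Pr] by (auto simp: node_kinds_def)
  with False sl assms(2,3) show ?thesis
    by (auto simp: gnp_node_def sppf_node_def spans_def Let_def)
qed

lemma gnp_packed_packed_ok:
  assumes "sl \<in> grammar_slots Pr" "sppf_node Pr V z" "spans Pr V w k (lext z)"
  shows "Ball (gnp_packed Pr sl w z) (packed_ok Pr V)"
  using assms by (auto simp: gnp_packed_def packed_ok_def spans_def)

lemma gll_state_ok_add_descs: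
  "gll_state_ok Pr V \<sigma> \<Longrightarrow> Ball D (desc_ok Pr V) \<Longrightarrow> gll_state_ok Pr V (add_descs D \<sigma>)"
  by (auto simp: gll_state_ok_def add_descs_def)

text \<open>Shared by pop and by create, which replays earlier pops along a new GSS edge.\<close>
lemma return_node_ok:
  assumes "gss_edge_ok Pr V ((LS sl, k), w, (L', k'))" "sppf_node Pr V z" "lext z = k"
  shows "sppf_node Pr V (gnp_node Pr sl w z) \<and> Ball (gnp_packed Pr sl w z) (packed_ok Pr V)
    \<and> desc_ok Pr V (LS sl, (L', k'), rext z, gnp_node Pr sl w z)"
proof -
  obtain X \<alpha> \<beta> where sl: "sl = Slot X \<alpha> \<beta>" "\<alpha> \<noteq> []" "sl \<in> grammar_slots Pr"
      "gnp_trivial Pr sl \<longrightarrow> w = SDummy"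
    and rest: "L' \<in> grammar_labels Pr" "k' \<in> V" "spans Pr V w k' k"
    using assms(1) unfolding gss_edge_ok_def by auto
  have "sppf_node Pr V (gnp_node Pr sl w z) \<and> lext (gnp_node Pr sl w z) = k'
      \<and> rext (gnp_node Pr sl w z) = rext z"
    using gnp_node_sppf_node[OF sl(3) assms(2), of w k'] rest sl assms(3) by simp
  moreover have "Ball (gnp_packed Pr sl w z) (packed_ok Pr V)"
    using gnp_packed_packed_ok[OF sl(3) assms(2)] rest assms(3) by auto
  ultimately show ?thesis using sl rest
    by (auto simp: desc_ok_def spans_def sppf_node_def LS_in_grammar_labels)
qed

lemma gll_state_ok_pop:
  assumes ok: "gll_state_ok Pr V \<sigma>" and u: "fst u \<in> grammar_labels Pr" "snd u \<in> V"
    and z: "sppf_node Pr V z" "lext z = snd u" "rext z = i"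
  shows "gll_state_ok Pr V (gll_pop Pr u i z \<sigma>)"
proof (cases "fst u")
  case L0
  then show ?thesis using ok by (simp add: gll_pop_def)
next
  case (LS sl)
  obtain k where uk: "u = (LS sl, k)" using LS by (cases u) auto
  have ret: "sppf_node Pr V (gnp_node Pr sl w z) \<and> Ball (gnp_packed Pr sl w z) (packed_ok Pr V)
      \<and> desc_ok Pr V (LS sl, v, i, gnp_node Pr sl w z)" if "(u, w, v) \<in> GE \<sigma>" for w v
    using return_node_ok[of Pr V sl k w "fst v" "snd v" z] that ok z uk
    by (auto simp: gll_state_ok_def)
  show ?thesis
    unfolding gll_pop_def LS lbl.case Let_def
    by (rule gll_state_ok_add_descs)
      (use ok u z uk ret in \<open>auto simp: gll_state_ok_def popped_ok_def LS\<close>)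
qed

lemma gll_state_ok_create:
  assumes ok: "gll_state_ok Pr V \<sigma>"
    and sl: "sl = Slot X \<alpha> \<beta>" "\<alpha> \<noteq> []" "sl \<in> grammar_slots Pr"
      "gnp_trivial Pr sl \<longrightarrow> w = SDummy"
    and u: "fst u \<in> grammar_labels Pr" "snd u \<in> V" and "i \<in> V" and w: "spans Pr V w (snd u) i"
  shows "gll_state_ok Pr V (gll_create Pr sl u i w \<sigma>)"
proof -
  have edge: "gss_edge_ok Pr V ((LS sl, i), w, u)"
    using assms by (cases u) (auto simp: gss_edge_ok_def)
  have ret: "sppf_node Pr V (gnp_node Pr sl w z) \<and> Ball (gnp_packed Pr sl w z) (packed_ok Pr V)
      \<and> desc_ok Pr V (LS sl, u, rext z, gnp_node Pr sl w z)" if "((LS sl, i), z) \<in> Ps \<sigma>" for z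
    using return_node_ok[of Pr V sl i w "fst u" "snd u" z] edge that ok
    by (auto simp: gll_state_ok_def popped_ok_def)
  have ok1: "gll_state_ok Pr V (\<sigma>\<lparr>GN := GN \<sigma> \<union> {(LS sl, i)}\<rparr>)"
    using ok sl \<open>i \<in> V\<close> by (auto simp: gll_state_ok_def LS_in_grammar_labels)
  show ?thesis
  proof (cases "((LS sl, i), w, u) \<in> GE \<sigma>")
    case True
    then show ?thesis using ok1 by (simp add: gll_create_def Let_def)
  next
    case False
    then show ?thesis
      unfolding gll_create_def Let_def
      by (simp, intro gll_state_ok_add_descs)
        (use ok1 edge ret in \<open>auto simp: gll_state_ok_def\<close>)
  qed
qed

lemma desc_ok_tbl_union:
  assumes "fst u \<in> grammar_labels Pr" "snd u = i" "i \<in> V"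
  shows "Ball {(LS s, u, i, SDummy) | s. s \<in> tbl_union Pr E A i} (desc_ok Pr V)"
  using assms
  by (cases u) (force simp: tbl_union_def ll_table_def grammar_slots_def desc_ok_def
                            spans_def grammar_labels_def)

lemma gll_state_ok_process_L0:
  assumes ok: "gll_state_ok Pr V \<sigma>" and d: "desc_ok Pr V (L0, u, i, w)"
  shows "gll_state_ok Pr V (gll_process Pr S E (L0, u, i, w) \<sigma>)"
proof -
  have "fst u \<in> grammar_labels Pr" "snd u = i" "i \<in> V"
    using d by (auto simp: desc_ok_def spans_def split: prod.splits)
  then show ?thesis
    unfolding gll_process_def
    by (simp, intro gll_state_ok_add_descs[OF ok] desc_ok_tbl_union)
qed

lemma gll_state_ok_process_eps:
  assumes ok: "gll_state_ok Pr V \<sigma>" and d: "desc_ok Pr V (LS (Slot X [] []), u, i, w)"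
  shows "gll_state_ok Pr V (gll_process Pr S E (LS (Slot X [] []), u, i, w) \<sigma>)"
proof -
  have w: "w = SDummy" "snd u = i" and u: "fst u \<in> grammar_labels Pr" "i \<in> V"
    and sl: "Slot X [] [] \<in> grammar_slots Pr"
    using d by (auto simp: desc_ok_def spans_def LS_in_grammar_labels split: prod.splits)
  have ntriv: "\<not> gnp_trivial Pr (Slot X [] [])" by (simp add: gnp_trivial_def)
  then have nt: "gnp_node Pr (Slot X [] []) SDummy (SEps i) = SNT i X i"
    by (simp add: gnp_node_def)
  have nodes: "sppf_node Pr V (SEps i)" "sppf_node Pr V (SNT i X i)"
    using u KNT_in_node_kinds[OF sl] by (auto simp: sppf_node_def node_kinds_def)
  have "gll_state_ok Pr V (get_node_p Pr (Slot X [] []) SDummy (SEps i) (\<sigma>\<lparr>SN := SN \<sigma> \<union> {SEps i}\<rparr>))"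
    using ok nodes sl nt ntriv
    by (auto simp: gll_state_ok_def get_node_p_def gnp_packed_def packed_ok_def)
  then show ?thesis
    using w u nodes nt by (auto simp: gll_process_def Let_def intro!: gll_state_ok_pop)
qed

lemma gll_state_ok_process_return:
  assumes "gll_state_ok Pr V \<sigma>" "desc_ok Pr V (LS (Slot X \<alpha> []), u, i, w)" "\<alpha> \<noteq> []"
  shows "gll_state_ok Pr V (gll_process Pr S E (LS (Slot X \<alpha> []), u, i, w) \<sigma>)"
  using assms
  by (cases u) (auto simp: gll_process_def desc_ok_def spans_def intro!: gll_state_ok_pop)

lemma gll_state_ok_process_terminal:
  assumes ok: "gll_state_ok Pr V \<sigma>" and d: "desc_ok Pr V (LS (Slot X \<alpha> (T a # \<beta>)), u, i, w)"
    and E: "E \<subseteq> V \<times> UNIV \<times> V"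
  shows "gll_state_ok Pr V (gll_process Pr S E (LS (Slot X \<alpha> (T a # \<beta>)), u, i, w) \<sigma>)"
proof -
  define sl where "sl = Slot X (\<alpha> @ [T a]) \<beta>"
  have slot: "Slot X \<alpha> (T a # \<beta>) \<in> grammar_slots Pr"
    and u: "fst u \<in> grammar_labels Pr" "snd u \<in> V" "i \<in> V" and w: "spans Pr V w (snd u) i"
    and aw: "\<alpha> = [] \<longleftrightarrow> w = SDummy"
    using d by (auto simp: desc_ok_def LS_in_grammar_labels split: prod.splits)
  have sl: "sl \<in> grammar_slots Pr" using slot by (auto simp: grammar_slots_def sl_def)
  have "KTerm a \<in> node_kinds Pr"
    using slot by (force simp: node_kinds_def grammar_slots_def grammar_terminals_def)
  then have terminal: "sppf_node Pr V (STerm i a j)" if "(i, a, j) \<in> E" for j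
    using that E u by (auto simp: sppf_node_def)
  have triv: "gnp_trivial Pr sl \<longrightarrow> w = SDummy"
    using aw by (auto simp: gnp_trivial_def sl_def)
  have new: "sppf_node Pr V (gnp_node Pr sl w (STerm i a j))
      \<and> Ball (gnp_packed Pr sl w (STerm i a j)) (packed_ok Pr V)
      \<and> desc_ok Pr V (LS sl, u, j, gnp_node Pr sl w (STerm i a j))" if "(i, a, j) \<in> E" for j
    using gnp_node_sppf_node[OF sl terminal[OF that], of w "snd u"]
      gnp_packed_packed_ok[OF sl terminal[OF that], of w "snd u"] w triv u sl
    by (cases u) (auto simp: desc_ok_def spans_def sppf_node_def LS_in_grammar_labels sl_def)
  show ?thesis
    unfolding gll_process_def
    by (simp add: Let_def sl_def[symmetric], intro gll_state_ok_add_descs)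
      (use ok terminal new in \<open>auto simp: gll_state_ok_def\<close>)
qed

lemma gll_state_ok_process_nonterminal:
  assumes ok: "gll_state_ok Pr V \<sigma>" and d: "desc_ok Pr V (LS (Slot X \<alpha> (NT A # \<beta>)), u, i, w)"
  shows "gll_state_ok Pr V (gll_process Pr S E (LS (Slot X \<alpha> (NT A # \<beta>)), u, i, w) \<sigma>)"
proof -
  define sl where "sl = Slot X (\<alpha> @ [NT A]) \<beta>"
  have slot: "Slot X \<alpha> (NT A # \<beta>) \<in> grammar_slots Pr"
    and u: "fst u \<in> grammar_labels Pr" "snd u \<in> V" "i \<in> V" and w: "spans Pr V w (snd u) i"
    and aw: "\<alpha> = [] \<longleftrightarrow> w = SDummy"
    using d by (auto simp: desc_ok_def LS_in_grammar_labels split: prod.splits)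
  have sl: "sl \<in> grammar_slots Pr" using slot by (auto simp: grammar_slots_def sl_def)
  have triv: "gnp_trivial Pr sl \<longrightarrow> w = SDummy"
    using aw by (auto simp: gnp_trivial_def sl_def)
  have "gll_state_ok Pr V (gll_create Pr sl u i w \<sigma>)"
    using gll_state_ok_create[OF ok sl_def _ sl triv u] u w by simp
  moreover have "fst (LS sl, i) \<in> grammar_labels Pr"
    using sl by (simp add: LS_in_grammar_labels)
  ultimately show ?thesis
    unfolding gll_process_def using u
    by (simp add: Let_def sl_def[symmetric], intro gll_state_ok_add_descs desc_ok_tbl_union) auto
qed

lemma gll_state_ok_process:
  assumes ok: "gll_state_ok Pr V \<sigma>" and d: "desc_ok Pr V d" and E: "E \<subseteq> V \<times> UNIV \<times> V"
  shows "gll_state_ok Pr V (gll_process Pr S E d \<sigma>)"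
proof -
  obtain L u i w where d_eq: "d = (L, u, i, w)" by (cases d)
  note d = d[unfolded d_eq]
  show ?thesis
    unfolding d_eq
  proof (cases L)
    case L0
    then show "gll_state_ok Pr V (gll_process Pr S E (L, u, i, w) \<sigma>)"
      using gll_state_ok_process_L0[OF ok] d by simp
  next
    case (LS sl)
    obtain X \<alpha> \<beta> where sl: "sl = Slot X \<alpha> \<beta>" by (cases sl)
    show "gll_state_ok Pr V (gll_process Pr S E (L, u, i, w) \<sigma>)"
    proof (cases \<beta>)
      case Nil
      then show ?thesis
        using gll_state_ok_process_eps[OF ok] gll_state_ok_process_return[OF ok] d LS sl
        by (cases "\<alpha> = []") auto
    next
      case (Cons x \<beta>')
      then show ?thesis
        using gll_state_ok_process_terminal[OF ok _ E] gll_state_ok_process_nonterminal[OF ok]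
          d LS sl
        by (cases x) auto
    qed
  qed
qed

lemma gll_reachable_state_ok:
  assumes "gll_reachable Pr S E Vs \<sigma>" "Vs \<subseteq> V" "E \<subseteq> V \<times> UNIV \<times> V"
  shows "gll_state_ok Pr V \<sigma>"
  using assms(1) unfolding gll_reachable_def
proof (induction rule: rtranclp_induct)
  case base
  show ?case
    using assms(2) by (auto simp: gll_state_ok_def gll_init_def desc_ok_def spans_def grammar_labels_def)
next
  case (step \<sigma> \<sigma>')
  then obtain d where d: "d \<in> Rs \<sigma>" "\<sigma>' = gll_process Pr S E d (\<sigma>\<lparr>Rs := Rs \<sigma> - {d}\<rparr>)"
    unfolding gll_step_def by blast
  have "gll_state_ok Pr V (\<sigma>\<lparr>Rs := Rs \<sigma> - {d}\<rparr>)" "desc_ok Pr V d"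
    using step.IH d(1) by (auto simp: gll_state_ok_def)
  then show ?case unfolding d(2) using assms(3) by (rule gll_state_ok_process)
qed

section \<open>Counting the objects allowed by the invariant\<close>

lemma finite_card_le_if_subset_image:
  assumes "A \<subseteq> f ` B" "finite B" "card B = m"
  shows "finite A \<and> card A \<le> m"
  using finite_surj[OF assms(2,1)] surj_card_le[OF assms(2,1)] unfolding assms(3) by blast

lemma spans_node_of_kind:
  "spans Pr V w k i \<Longrightarrow> node_of_kind k i (kind_of w) = w \<and> kind_of w \<in> node_kinds Pr"
  using node_of_kind_of[of w] by (auto simp: spans_def sppf_node_def node_kinds_def)

lemma card_sppf_nodes_le:
  assumes "Ball N (sppf_node Pr V)" "finite Pr" "finite V"
  shows "finite N \<and> card N \<le> card (node_kinds Pr) * card V ^ 2"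
proof -
  have "N \<subseteq> (\<lambda>(j, i, c). node_of_kind j i c) ` (V \<times> V \<times> node_kinds Pr)"
  proof
    fix n assume "n \<in> N"
    then show "n \<in> (\<lambda>(j, i, c). node_of_kind j i c) ` (V \<times> V \<times> node_kinds Pr)"
      using assms(1) node_of_kind_of[of n]
      by (auto simp: sppf_node_def intro!: rev_image_eqI[of "(lext n, rext n, kind_of n)"])
  qed
  then show ?thesis
    by (rule finite_card_le_if_subset_image)
      (use assms(2,3) in \<open>simp_all add: finite_node_kinds card_cartesian_product power2_eq_square\<close>)
qed

lemma card_descs_le:
  assumes "Ball D (desc_ok Pr V)" "finite Pr" "finite V"
  shows "finite D \<and> card D \<le> card (grammar_labels Pr) ^ 2 * card (node_kinds Pr) * card V ^ 2"
proof -
  let ?B = "grammar_labels Pr \<times> grammar_labels Pr \<times> V \<times> V \<times> node_kinds Pr"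
  have "D \<subseteq> (\<lambda>(L, L', k, i, c). (L, (L', k), i, node_of_kind k i c)) ` ?B"
  proof
    fix d assume "d \<in> D"
    then obtain L L' k i w where "d = (L, (L', k), i, w)" "desc_ok Pr V (L, (L', k), i, w)"
      using assms(1) by (cases d) auto
    then show "d \<in> (\<lambda>(L, L', k, i, c). (L, (L', k), i, node_of_kind k i c)) ` ?B"
      using spans_node_of_kind[of Pr V w k i]
      by (auto simp: desc_ok_def intro!: rev_image_eqI[of "(L, L', k, i, kind_of w)"])
  qed
  then show ?thesis
    by (rule finite_card_le_if_subset_image)
      (use assms(2,3) in \<open>simp_all add: finite_grammar_labels finite_node_kinds
                                       card_cartesian_product power2_eq_square\<close>)
qed

lemma card_gss_edges_le:
  assumes "Ball G (gss_edge_ok Pr V)" "finite Pr" "finite V"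
  shows "finite G \<and> card G \<le> card (grammar_labels Pr) ^ 2 * card (node_kinds Pr) * card V ^ 2"
proof -
  let ?B = "grammar_labels Pr \<times> grammar_labels Pr \<times> V \<times> V \<times> node_kinds Pr"
  have "G \<subseteq> (\<lambda>(L, L', i, k, c). ((L, i), node_of_kind k i c, (L', k))) ` ?B"
  proof
    fix e assume "e \<in> G"
    then obtain L i w L' k where "e = ((L, i), w, (L', k))" "gss_edge_ok Pr V ((L, i), w, (L', k))"
      using assms(1) by (cases e) auto
    then show "e \<in> (\<lambda>(L, L', i, k, c). ((L, i), node_of_kind k i c, (L', k))) ` ?B"
      using spans_node_of_kind[of Pr V w k i]
      by (auto simp: gss_edge_ok_def LS_in_grammar_labels
               intro!: rev_image_eqI[of "(L, L', i, k, kind_of w)"])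
  qed
  then show ?thesis
    by (rule finite_card_le_if_subset_image)
      (use assms(2,3) in \<open>simp_all add: finite_grammar_labels finite_node_kinds
                                       card_cartesian_product power2_eq_square\<close>)
qed

lemma card_popped_le:
  assumes "Ball P (popped_ok Pr V)" "finite Pr" "finite V"
  shows "finite P \<and> card P \<le> card (grammar_labels Pr) * card (node_kinds Pr) * card V ^ 2"
proof -
  let ?B = "grammar_labels Pr \<times> V \<times> V \<times> node_kinds Pr"
  have "P \<subseteq> (\<lambda>(L, k, i, c). ((L, k), node_of_kind k i c)) ` ?B"
  proof
    fix p assume "p \<in> P"
    then obtain L k z where "p = ((L, k), z)" "popped_ok Pr V ((L, k), z)"
      using assms(1) by (cases p) auto
    then show "p \<in> (\<lambda>(L, k, i, c). ((L, k), node_of_kind k i c)) ` ?B"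
      using spans_node_of_kind[of Pr V z k "rext z"]
      by (auto simp: popped_ok_def spans_def sppf_node_def
               intro!: rev_image_eqI[of "(L, k, rext z, kind_of z)"])
  qed
  then show ?thesis
    by (rule finite_card_le_if_subset_image)
      (use assms(2,3) in \<open>simp_all add: finite_grammar_labels finite_node_kinds
                                       card_cartesian_product power2_eq_square\<close>)
qed

lemma card_packed_le:
  assumes "Ball K (packed_ok Pr V)" "finite Pr" "finite V"
  shows "finite K \<and> card K \<le> card (grammar_slots Pr) * card (node_kinds Pr) ^ 2 * card V ^ 3"
proof -
  let ?B = "grammar_slots Pr \<times> V \<times> V \<times> V \<times> node_kinds Pr \<times> node_kinds Pr"
  let ?f = "\<lambda>(sl, j, k, i, cw, cz). (gnp_node Pr sl (node_of_kind j k cw) (node_of_kind k i cz),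
              sl, k, node_of_kind j k cw, node_of_kind k i cz)"
  have "K \<subseteq> ?f ` ?B"
  proof
    fix x assume "x \<in> K"
    then obtain p sl piv w z where x: "x = (p, sl, piv, w, z)" "packed_ok Pr V (p, sl, piv, w, z)"
      using assms(1) by (cases x) auto
    then have z: "spans Pr V z (lext z) (rext z)"
      by (auto simp: packed_ok_def spans_def)
    obtain j where w: "spans Pr V w j (lext z)" and "j \<in> V"
      using x(2) by (auto simp: packed_ok_def spans_def sppf_node_def)
    have "x = ?f (sl, j, lext z, rext z, kind_of w, kind_of z)"
      using x spans_node_of_kind[OF z] spans_node_of_kind[OF w] by (simp add: packed_ok_def)
    moreover have "(sl, j, lext z, rext z, kind_of w, kind_of z) \<in> ?B"
      using x(2) \<open>j \<in> V\<close> spans_node_of_kind[OF z] spans_node_of_kind[OF w]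
      by (simp add: packed_ok_def sppf_node_def)
    ultimately show "x \<in> ?f ` ?B" by (rule image_eqI)
  qed
  then show ?thesis
    by (rule finite_card_le_if_subset_image)
      (use assms(2,3) in \<open>simp_all add: finite_grammar_slots finite_node_kinds
                                       card_cartesian_product power2_eq_square power3_eq_cube\<close>)
qed

definition gll_space_constant :: "('n \<times> ('n,'t) sym list) set \<Rightarrow> nat" where
  "gll_space_constant Pr = (let l = card (grammar_labels Pr); c = card (node_kinds Pr) in
     3 * l ^ 2 * c + l * c + l + c + card (grammar_slots Pr) * c ^ 2)"

lemma gll_state_ok_space_le:
  assumes ok: "gll_state_ok Pr V \<sigma>" and "finite Pr" "finite V"
  shows "gll_finite \<sigma> \<and> gll_space \<sigma> \<le> gll_space_constant Pr * card V ^ 3"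
proof -
  define l c s n where "l = card (grammar_labels Pr)" and "c = card (node_kinds Pr)"
    and "s = card (grammar_slots Pr)" and "n = card V"
  have R: "finite (Rs \<sigma>) \<and> card (Rs \<sigma>) \<le> l ^ 2 * c * n ^ 2"
    and U: "finite (Us \<sigma>) \<and> card (Us \<sigma>) \<le> l ^ 2 * c * n ^ 2"
    using card_descs_le[OF _ assms(2,3)] ok
    unfolding gll_state_ok_def l_def c_def n_def by blast+
  have P: "finite (Ps \<sigma>) \<and> card (Ps \<sigma>) \<le> l * c * n ^ 2"
    using card_popped_le[OF _ assms(2,3)] ok
    unfolding gll_state_ok_def l_def c_def n_def by blast
  have GE: "finite (GE \<sigma>) \<and> card (GE \<sigma>) \<le> l ^ 2 * c * n ^ 2"
    using card_gss_edges_le[OF _ assms(2,3)] ok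
    unfolding gll_state_ok_def l_def c_def n_def by blast
  have SN: "finite (SN \<sigma>) \<and> card (SN \<sigma>) \<le> c * n ^ 2"
    using card_sppf_nodes_le[OF _ assms(2,3)] ok
    unfolding gll_state_ok_def c_def n_def by blast
  have PK: "finite (PK \<sigma>) \<and> card (PK \<sigma>) \<le> s * c ^ 2 * n ^ 3"
    using card_packed_le[OF _ assms(2,3)] ok
    unfolding gll_state_ok_def s_def c_def n_def by blast
  have GN_sub: "GN \<sigma> \<subseteq> grammar_labels Pr \<times> V"
    using ok by (simp add: gll_state_ok_def)
  have fin: "finite (grammar_labels Pr \<times> V)"
    using assms(2,3) by (simp add: finite_grammar_labels)
  have GN: "finite (GN \<sigma>) \<and> card (GN \<sigma>) \<le> l * n"
    using finite_subset[OF GN_sub fin] card_mono[OF fin GN_sub]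
    unfolding l_def n_def card_cartesian_product by blast
  have "n ^ 2 \<le> n ^ 3"
    by (cases "n = 0") (simp_all add: power_increasing)
  moreover have "n \<le> n ^ 3"
    by (cases "n = 0") (simp_all add: power_increasing[of 1 3, simplified])
  ultimately have "l ^ 2 * c * n ^ 2 \<le> l ^ 2 * c * n ^ 3" "l * c * n ^ 2 \<le> l * c * n ^ 3"
    "c * n ^ 2 \<le> c * n ^ 3" "l * n \<le> l * n ^ 3"
    by (simp_all add: mult_le_mono2)
  moreover have "gll_space_constant Pr * n ^ 3
      = 3 * (l ^ 2 * c * n ^ 3) + l * c * n ^ 3 + l * n ^ 3 + c * n ^ 3 + s * c ^ 2 * n ^ 3"
    unfolding gll_space_constant_def Let_def l_def c_def s_def by (simp add: algebra_simps)
  ultimately show ?thesis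
    using R U P GE SN PK GN unfolding gll_finite_def gll_space_def n_def by linarith
qed

theorem theorem3:
  fixes Pr :: "('n \<times> ('n,'t) sym list) set" and S :: 'n
  assumes "finite Pr"
  shows "\<exists>C::nat. \<forall>(V::nat set) (E::(nat \<times> 't \<times> nat) set) Vs Vf \<sigma>.
           finite V \<and> E \<subseteq> V \<times> UNIV \<times> V \<and> Vs \<subseteq> V \<and> Vf \<subseteq> V
           \<and> gll_reachable Pr S E Vs \<sigma>
           \<longrightarrow> gll_finite \<sigma> \<and> gll_space \<sigma> \<le> C * (card V ^ 3 + card E)"
proof (intro exI[of _ "gll_space_constant Pr"] allI impI, elim conjE)
  fix V :: "nat set" and E :: "(nat \<times> 't \<times> nat) set" and Vs Vf and \<sigma> :: "('n,'t,nat) gll_state"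
  assume V: "finite V" and E: "E \<subseteq> V \<times> UNIV \<times> V" and Vs: "Vs \<subseteq> V"
    and reach: "gll_reachable Pr S E Vs \<sigma>"
  have "gll_finite \<sigma> \<and> gll_space \<sigma> \<le> gll_space_constant Pr * card V ^ 3"
    using gll_state_ok_space_le[OF gll_reachable_state_ok[OF reach Vs E] assms V] .
  moreover have "gll_space_constant Pr * card V ^ 3 \<le> gll_space_constant Pr * (card V ^ 3 + card E)"
    by simp
  ultimately show "gll_finite \<sigma> \<and> gll_space \<sigma> \<le> gll_space_constant Pr * (card V ^ 3 + card E)"
    by (meson le_trans)
qed

end
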